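(* Let $X$ be a reflexive complex Banach space and let $A,B$ be positive self-adjoint operators from $X$ to $X^\ast$ with positive lower bound, such that $\operatorname{dom}J_A^\ast\cap\operatorname{dom}J_B^\ast$ is dense in $X$. Let $J$ be the densely defined operator from $H_A\oplus H_B$ to $X^\ast$ with $\operatorname{dom}J=\{Ax\oplus By: x\in\operatorname{dom}A,\ y\in\operatorname{dom}B\}$ and $J(Ax\oplus By)=Ax+By$. Then $J^{\ast\ast}J^\ast=A\dotplus B$ (the form sum), and $A\dotplus B$ is an extension of $A+B$ (defined on $\operatorname{dom}A\cap\operatorname{dom}B$).
   Context: $X^\ast$ denotes the conjugate dual of $X$ (continuous conjugate-linear functionals on $X$); $X$ is identified with $X^{\ast\ast}$. For $v\in X^\ast$, $x\in X$ write $(v,x):=v(x)$ and $(x,v):=\overline{v(x)}$. An operator $A$ from $X$ to $X^\ast$ is positive if $(Ax,x)\ge0$ for all $x\in\operatorname{dom}A$, has positive lower bound if $(Ax,x)\ge\gamma\|x\|^2$ for some $\gamma>0$ and all $x\in\operatorname{dom}A$; its adjoint $A^\ast$ has domain $\{y\in X:x\mapsto(Ax,y)\text{ continuous on }\operatorname{dom}A\}$ and is determined by $(x,A^\ast y)=(Ax,y)$; $A$ is self-adjoint if $A=A^\ast$. For a positive self-adjoint $A$: $H_A$ is the completion of $\operatorname{ran}A$ with respect to the inner product $[Ax,Ay]_A:=(Ax,y)$; $J_A$ is the operator from $H_A$ to $X^\ast$ with $\operatorname{dom}J_A=\operatorname{ran}A$, $J_A(Ax)=Ax$. Adjoints of operators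 between a Hilbert space $K$ (inner product $[\cdot,\cdot]$) and $X^\ast$: for densely defined $T$ from $K$ to $X^\ast$, $T^\ast$ is the operator from $X$ to $K$ with $\operatorname{dom}T^\ast=\{y\in X:h\mapsto(Th,y)\text{ continuous on }\operatorname{dom}T\}$ and $[h,T^\ast y]=(Th,y)$; for densely defined $S$ from $X$ to $K$, $S^\ast$ is the operator from $K$ to $X^\ast$ with $\operatorname{dom}S^\ast=\{h\in K: y\mapsto[Sy,h]\text{ continuous on }\operatorname{dom}S\}$ and $(S^\ast h,y)=[h,Sy]$ for $y\in\operatorname{dom}S$. $J^{\ast\ast}=(J^\ast)^\ast$. Form sum: $H_{A,B}:=\operatorname{dom}J_A^\ast\cap\operatorname{dom}J_B^\ast$ equipped with the inner product $t(x,y)=[J_A^\ast x,J_A^\ast y]_A+[J_B^\ast x,J_B^\ast y]_B$ is a Hilbert space, dense in $X$, with $t(x,x)\ge\gamma\|x\|^2$. $A\dotplus B$ is the operator with domain $\{x\in H_{A,B}: y\mapsto t(x,y)\text{ continuous on }H_{A,B}\text{ in the norm of }X\}$ and $(A\dotplus B)x$ the element $z\in X^\ast$ with $(z,y)=t(x,y)$ for all $y\in H_{A,B}$. *)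

theory Defs
  imports "HOL-Analysis.Analysis" "HOL-Library.Complex_Order"
begin

class complex_vec = real_vector +
  fixes scaleC :: "complex \<Rightarrow> 'a \<Rightarrow> 'a"  (infixr \<open>*\<^sub>C\<close> 75)
  assumes scaleC_add_right: "a *\<^sub>C (x + y) = a *\<^sub>C x + a *\<^sub>C y"
    and scaleC_add_left: "(a + b) *\<^sub>C x = a *\<^sub>C x + b *\<^sub>C x"
    and scaleC_scaleC: "a *\<^sub>C (b *\<^sub>C x) = (a * b) *\<^sub>C x"
    and scaleC_one: "1 *\<^sub>C x = x"
    and scaleR_scaleC: "r *\<^sub>R x = complex_of_real r *\<^sub>C x"

class complex_normed_vec = complex_vec + real_normed_vector +
  assumes norm_scaleC: "norm (a *\<^sub>C x) = cmod a * norm x"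

text \<open>Elements of the conjugate dual X* are represented as functions X => complex.
  For v in X* and x in X: (v,x) = v x and (x,v) = cnj (v x).\<close>

definition cdual :: "('x::complex_normed_vec \<Rightarrow> complex) set" where
  "cdual = {v. (\<forall>x y. v (x + y) = v x + v y) \<and> (\<forall>c x. v (c *\<^sub>C x) = cnj c * v x)
               \<and> continuous_on UNIV v}"

definition dnorm :: "('x::complex_normed_vec \<Rightarrow> complex) \<Rightarrow> real" where
  "dnorm v = (SUP x\<in>{x. norm x \<le> 1}. cmod (v x))"

text \<open>Reflexive: every continuous conjugate-linear functional on X* is of the form
  v |-> (x,v) = cnj (v x) for some x in X.\<close>
definition reflexive_sp :: "'x::complex_normed_vec itself \<Rightarrow> bool" where
  "reflexive_sp _ \<longleftrightarrow>
     (\<forall>\<phi> :: ('x \<Rightarrow> complex) \<Rightarrow> complex.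
        ((\<forall>v\<in>cdual. \<forall>w\<in>cdual. \<phi> (\<lambda>x. v x + w x) = \<phi> v + \<phi> w)
         \<and> (\<forall>c. \<forall>v\<in>cdual. \<phi> (\<lambda>x. c * v x) = cnj c * \<phi> v)
         \<and> (\<forall>v\<in>cdual. \<forall>e>0. \<exists>d>0. \<forall>w\<in>cdual. dnorm (\<lambda>x. w x - v x) < d \<longrightarrow> cmod (\<phi> w - \<phi> v) < e))
        \<longrightarrow> (\<exists>x. \<forall>v\<in>cdual. \<phi> v = cnj (v x)))"

definition aval :: "('a \<times> 'b) set \<Rightarrow> 'a \<Rightarrow> 'b" where
  "aval G x = (THE v. (x, v) \<in> G)"

text \<open>Linear operator from X to X* (graph: single-valued linear subspace of X x X*).\<close>
definition op_XXs :: "('x::complex_normed_vec \<times> ('x \<Rightarrow> complex)) set \<Rightarrow> bool" where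
  "op_XXs G \<longleftrightarrow> G \<subseteq> UNIV \<times> cdual
     \<and> (\<forall>x u w. (x, u) \<in> G \<longrightarrow> (x, w) \<in> G \<longrightarrow> u = w)
     \<and> (0, \<lambda>_. 0) \<in> G
     \<and> (\<forall>x u y w. (x, u) \<in> G \<longrightarrow> (y, w) \<in> G \<longrightarrow> (x + y, \<lambda>z. u z + w z) \<in> G)
     \<and> (\<forall>c x u. (x, u) \<in> G \<longrightarrow> (c *\<^sub>C x, \<lambda>z. c * u z) \<in> G)"

definition positive_op :: "('x::complex_normed_vec \<times> ('x \<Rightarrow> complex)) set \<Rightarrow> bool" where
  "positive_op G \<longleftrightarrow> (\<forall>(x, v)\<in>G. 0 \<le> v x)"

definition pos_lower_bound :: "('x::complex_normed_vec \<times> ('x \<Rightarrow> complex)) set \<Rightarrow> bool" where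
  "pos_lower_bound G \<longleftrightarrow> (\<exists>\<gamma>>0. \<forall>(x, v)\<in>G. complex_of_real (\<gamma> * (norm x)\<^sup>2) \<le> v x)"

definition cont_on_d :: "('k \<Rightarrow> 'k \<Rightarrow> real) \<Rightarrow> 'k set \<Rightarrow> ('k \<Rightarrow> complex) \<Rightarrow> bool" where
  "cont_on_d d D f \<longleftrightarrow>
     (\<forall>h\<in>D. \<forall>e>0. \<exists>\<delta>>0. \<forall>k\<in>D. d k h < \<delta> \<longrightarrow> cmod (f k - f h) < e)"

definition adjXX :: "('x::complex_normed_vec \<times> ('x \<Rightarrow> complex)) set \<Rightarrow> ('x \<times> ('x \<Rightarrow> complex)) set" where
  "adjXX G = {(y, z). cont_on_d dist (Domain G) (\<lambda>x. aval G x y) \<and> z \<in> cdual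
                     \<and> (\<forall>(x, v)\<in>G. cnj (z x) = v y)}"

definition self_adjoint_op :: "('x::complex_normed_vec \<times> ('x \<Rightarrow> complex)) set \<Rightarrow> bool" where
  "self_adjoint_op G \<longleftrightarrow> G = adjXX G"

definition is_hilbert_ip :: "('h::{complex_normed_vec, banach} \<Rightarrow> 'h \<Rightarrow> complex) \<Rightarrow> bool" where
  "is_hilbert_ip ip \<longleftrightarrow>
     (\<forall>x y z. ip (x + y) z = ip x z + ip y z)
   \<and> (\<forall>c x y. ip (c *\<^sub>C x) y = c * ip x y)
   \<and> (\<forall>x y. ip y x = cnj (ip x y))
   \<and> (\<forall>x. ip x x = complex_of_real ((norm x)\<^sup>2))"

definition ip_dist :: "('k::minus \<Rightarrow> 'k \<Rightarrow> complex) \<Rightarrow> 'k \<Rightarrow> 'k \<Rightarrow> real" where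
  "ip_dist ip h k = sqrt (Re (ip (h - k) (h - k)))"

definition adjKX :: "('k::minus \<Rightarrow> 'k \<Rightarrow> complex) \<Rightarrow> ('k \<times> ('x::complex_normed_vec \<Rightarrow> complex)) set
                     \<Rightarrow> ('x \<times> 'k) set" where
  "adjKX ip T = {(y, k). cont_on_d (ip_dist ip) (Domain T) (\<lambda>h. aval T h y)
                        \<and> (\<forall>(h, v)\<in>T. ip h k = v y)}"

definition adjXK :: "('k \<Rightarrow> 'k \<Rightarrow> complex) \<Rightarrow> ('x::complex_normed_vec \<times> 'k) set
                     \<Rightarrow> ('k \<times> ('x \<Rightarrow> complex)) set" where
  "adjXK ip S = {(h, z). cont_on_d dist (Domain S) (\<lambda>y. ip (aval S y) h) \<and> z \<in> cdual
                        \<and> (\<forall>(y, k)\<in>S. z y = ip h k)}"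

text \<open>(H, ip, iota) is a completion of ran A w.r.t. [Ax, Ay]_A = (Ax, y): iota is a linear
  isometric (inner-product preserving) embedding of ran A with dense range in the
  Hilbert space H.\<close>
definition is_completion_A ::
  "('h::{complex_normed_vec, banach} \<Rightarrow> 'h \<Rightarrow> complex) \<Rightarrow> (('x::complex_normed_vec \<Rightarrow> complex) \<Rightarrow> 'h)
   \<Rightarrow> ('x \<times> ('x \<Rightarrow> complex)) set \<Rightarrow> bool" where
  "is_completion_A ip \<iota> A \<longleftrightarrow> is_hilbert_ip ip
     \<and> (\<forall>u\<in>Range A. \<forall>w\<in>Range A. \<iota> (\<lambda>x. u x + w x) = \<iota> u + \<iota> w)
     \<and> (\<forall>c. \<forall>u\<in>Range A. \<iota> (\<lambda>x. c * u x) = c *\<^sub>C \<iota> u)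
     \<and> (\<forall>(x, u)\<in>A. \<forall>(y, w)\<in>A. ip (\<iota> u) (\<iota> w) = u y)
     \<and> closure (\<iota> ` Range A) = UNIV"

definition J_op :: "(('x::complex_normed_vec \<Rightarrow> complex) \<Rightarrow> 'h) \<Rightarrow> ('x \<times> ('x \<Rightarrow> complex)) set
                    \<Rightarrow> ('h \<times> ('x \<Rightarrow> complex)) set" where
  "J_op \<iota> A = {(\<iota> u, u) | u. u \<in> Range A}"

definition form_dom where
  "form_dom ipA \<iota>A A ipB \<iota>B B =
     Domain (adjKX ipA (J_op \<iota>A A)) \<inter> Domain (adjKX ipB (J_op \<iota>B B))"

definition form_t where
  "form_t ipA \<iota>A A ipB \<iota>B B x y =
     ipA (aval (adjKX ipA (J_op \<iota>A A)) x) (aval (adjKX ipA (J_op \<iota>A A)) y)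
   + ipB (aval (adjKX ipB (J_op \<iota>B B)) x) (aval (adjKX ipB (J_op \<iota>B B)) y)"

definition form_sum ::
  "('ha::{complex_normed_vec, banach} \<Rightarrow> 'ha \<Rightarrow> complex) \<Rightarrow> (('x::complex_normed_vec \<Rightarrow> complex) \<Rightarrow> 'ha)
   \<Rightarrow> ('x \<times> ('x \<Rightarrow> complex)) set
   \<Rightarrow> ('hb::{complex_normed_vec, banach} \<Rightarrow> 'hb \<Rightarrow> complex) \<Rightarrow> (('x \<Rightarrow> complex) \<Rightarrow> 'hb)
   \<Rightarrow> ('x \<times> ('x \<Rightarrow> complex)) set \<Rightarrow> ('x \<times> ('x \<Rightarrow> complex)) set" where
  "form_sum ipA \<iota>A A ipB \<iota>B B =
     {(x, z). x \<in> form_dom ipA \<iota>A A ipB \<iota>B B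
        \<and> cont_on_d dist (form_dom ipA \<iota>A A ipB \<iota>B B) (\<lambda>y. form_t ipA \<iota>A A ipB \<iota>B B x y)
        \<and> z \<in> cdual
        \<and> (\<forall>y\<in>form_dom ipA \<iota>A A ipB \<iota>B B. z y = form_t ipA \<iota>A A ipB \<iota>B B x y)}"

definition ip_sum :: "('ha \<Rightarrow> 'ha \<Rightarrow> complex) \<Rightarrow> ('hb \<Rightarrow> 'hb \<Rightarrow> complex)
                      \<Rightarrow> 'ha \<times> 'hb \<Rightarrow> 'ha \<times> 'hb \<Rightarrow> complex" where
  "ip_sum ipA ipB p q = ipA (fst p) (fst q) + ipB (snd p) (snd q)"

definition J_sum :: "(('x::complex_normed_vec \<Rightarrow> complex) \<Rightarrow> 'ha) \<Rightarrow> ('x \<times> ('x \<Rightarrow> complex)) set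
                     \<Rightarrow> (('x \<Rightarrow> complex) \<Rightarrow> 'hb) \<Rightarrow> ('x \<times> ('x \<Rightarrow> complex)) set
                     \<Rightarrow> (('ha \<times> 'hb) \<times> ('x \<Rightarrow> complex)) set" where
  "J_sum \<iota>A A \<iota>B B = {((\<iota>A u, \<iota>B w), \<lambda>x. u x + w x) | u w. u \<in> Range A \<and> w \<in> Range B}"

definition op_sum :: "('x \<times> ('x \<Rightarrow> complex)) set \<Rightarrow> ('x \<times> ('x \<Rightarrow> complex)) set
                      \<Rightarrow> ('x \<times> ('x \<Rightarrow> complex)) set" where
  "op_sum A B = {(x, \<lambda>y. u y + w y) | x u w. (x, u) \<in> A \<and> (x, w) \<in> B}"

end

theory Submission
  imports Defs
begin

(* dom J is spanned by the vectors Ax \<oplus> 0 and 0 \<oplus> By, so the adjoint splits as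
   J* y = J_A* y \<oplus> J_B* y with dom J* = dom J_A* \<inter> dom J_B*, and therefore
   [J* x, J* y] = t(x, y). For any single-valued S from X into a Hilbert space, the relational
   composite S* S is by unfolding the operator of the form [S x, S y] on dom S; with S = J* this is
   the operator of t, i.e. the form sum. For x in dom A \<inter> dom B one has J_A* x = Ax and
   J_B* x = Bx, whence t(x, y) = (Ax + Bx, y). The lower bound of A is what makes the embedding of
   ran A into H_A injective, so that J_A and J are single-valued. *)

(* H_A \<oplus> H_B is the product type; this instance makes ip_sum a Hilbert inner product on it. *)
instantiation prod :: (complex_vec, complex_vec) complex_vec
begin

definition scaleC_prod :: "complex \<Rightarrow> 'a \<times> 'b \<Rightarrow> 'a \<times> 'b" where
  "scaleC_prod c p = (c *\<^sub>C fst p, c *\<^sub>C snd p)"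

instance
  by standard (simp_all add: scaleC_prod_def scaleR_prod_def scaleC_add_right scaleC_add_left
      scaleC_scaleC scaleC_one scaleR_scaleC prod_eq_iff)

end

instance prod :: (complex_normed_vec, complex_normed_vec) complex_normed_vec
  by standard (simp add: norm_prod_def scaleC_prod_def norm_scaleC power_mult_distrib
      real_sqrt_mult flip: distrib_left)

lemma cont_on_d_dist_iff: "cont_on_d dist D f \<longleftrightarrow> continuous_on D f"
  unfolding cont_on_d_def continuous_on_iff dist_norm ..

lemma aval_eq: "single_valued G \<Longrightarrow> (x, v) \<in> G \<Longrightarrow> aval G x = v"
  unfolding aval_def by (blast dest: single_valuedD)

locale hilbert_ip =
  fixes ip :: "'h::{complex_normed_vec, banach} \<Rightarrow> 'h \<Rightarrow> complex"
  assumes is_hilbert_ip: "is_hilbert_ip ip"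
begin

lemma ip_add_left: "ip (x + y) z = ip x z + ip y z"
  and ip_scaleC_left: "ip (c *\<^sub>C x) y = c * ip x y"
  and ip_cnj_swap: "ip y x = cnj (ip x y)"
  and ip_self: "ip x x = complex_of_real ((norm x)\<^sup>2)"
  using is_hilbert_ip unfolding is_hilbert_ip_def by blast+

lemma additive_ip_left: "Modules.additive (\<lambda>x. ip x y)"
  by unfold_locales (rule ip_add_left)

lemma ip_zero_left: "ip 0 y = 0"
  and ip_diff_left: "ip (x - z) y = ip x y - ip z y"
  using Modules.additive.zero[OF additive_ip_left] Modules.additive.diff[OF additive_ip_left] by blast+

lemma ip_diff_right: "ip y (x - z) = ip y x - ip y z"
  by (metis ip_cnj_swap ip_diff_left complex_cnj_diff)

lemma ip_scaleC_right: "ip x (c *\<^sub>C y) = cnj c * ip x y"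
  by (metis ip_cnj_swap ip_scaleC_left complex_cnj_mult)

lemma ip_Cauchy_Schwarz: "cmod (ip x y) \<le> norm x * norm y"
proof (cases "y = 0")
  case True
  then show ?thesis by (simp add: ip_cnj_swap[of x 0] ip_zero_left)
next
  case False
  define a where "a = ip x y"
  define n where "n = (norm y)\<^sup>2"
  define t where "t = a / of_real n"
  have n: "n > 0" using False by (simp add: n_def)
  have "ip (x - t *\<^sub>C y) (x - t *\<^sub>C y) = ip x x - cnj t * a - t * cnj a + t * cnj t * of_real n"
    unfolding ip_diff_left ip_diff_right ip_scaleC_left ip_scaleC_right a_def n_def
    by (simp add: ip_self ip_cnj_swap[of x y] algebra_simps)
  also have "\<dots> = of_real ((norm x)\<^sup>2 - (cmod a)\<^sup>2 / n)"
    using n by (simp add: t_def ip_self field_simps power2_eq_square flip: complex_norm_square)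
  finally have "0 \<le> (norm x)\<^sup>2 - (cmod a)\<^sup>2 / n"
    by (metis Re_complex_of_real ip_self zero_le_power2)
  then have "(cmod a)\<^sup>2 \<le> (norm x)\<^sup>2 * n"
    using n by (simp add: pos_divide_le_eq)
  then have "(cmod a)\<^sup>2 \<le> (norm x * norm y)\<^sup>2"
    by (simp add: n_def power_mult_distrib)
  then show ?thesis unfolding a_def by (rule power2_le_imp_le) simp
qed

lemma ip_dist_eq_dist: "ip_dist ip = dist"
  by (simp add: fun_eq_iff ip_dist_def ip_self dist_norm)

lemma continuous_on_ip_left: "continuous_on S (\<lambda>h. ip h k)"
proof (rule lipschitz_on_continuous_on)
  show "(norm k)-lipschitz_on S (\<lambda>h. ip h k)"
    by (rule lipschitz_onI)
      (simp_all add: dist_norm ip_Cauchy_Schwarz mult.commute[of "norm k"] flip: ip_diff_left)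
qed

lemma adjKX_iff:
  assumes "single_valued T"
  shows "(y, k) \<in> adjKX ip T \<longleftrightarrow> (\<forall>(h, v)\<in>T. ip h k = v y)"
proof -
  have "continuous_on (Domain T) (\<lambda>h. aval T h y)" if eq: "\<forall>(h, v)\<in>T. ip h k = v y"
  proof (rule continuous_on_cong[THEN iffD1, OF refl _ continuous_on_ip_left])
    show "ip h k = aval T h y" if "h \<in> Domain T" for h
      using that eq aval_eq[OF assms] by force
  qed
  then show ?thesis
    unfolding adjKX_def ip_dist_eq_dist cont_on_d_dist_iff by blast
qed

end

lemma is_hilbert_ip_ip_sum:
  assumes "is_hilbert_ip ipA" and "is_hilbert_ip ipB"
  shows "is_hilbert_ip (ip_sum ipA ipB)"
proof -
  interpret A: hilbert_ip ipA by (rule hilbert_ip.intro) fact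
  interpret B: hilbert_ip ipB by (rule hilbert_ip.intro) fact
  show ?thesis
    unfolding is_hilbert_ip_def ip_sum_def
  proof (intro conjI allI)
    fix x y z :: "'a \<times> 'b" and c :: complex
    show "ipA (fst (x + y)) (fst z) + ipB (snd (x + y)) (snd z)
        = ipA (fst x) (fst z) + ipB (snd x) (snd z) + (ipA (fst y) (fst z) + ipB (snd y) (snd z))"
      by (simp add: A.ip_add_left B.ip_add_left)
    show "ipA (fst (c *\<^sub>C x)) (fst y) + ipB (snd (c *\<^sub>C x)) (snd y)
        = c * (ipA (fst x) (fst y) + ipB (snd x) (snd y))"
      by (simp add: scaleC_prod_def A.ip_scaleC_left B.ip_scaleC_left distrib_left)
    show "ipA (fst y) (fst x) + ipB (snd y) (snd x) = cnj (ipA (fst x) (fst y) + ipB (snd x) (snd y))"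
      by (simp add: A.ip_cnj_swap[of "fst y" "fst x"] B.ip_cnj_swap[of "snd y" "snd x"])
    show "ipA (fst x) (fst x) + ipB (snd x) (snd x) = complex_of_real ((norm x)\<^sup>2)"
      by (simp add: A.ip_self B.ip_self norm_prod_def)
  qed
qed

lemma continuous_on_cnj_iff: "continuous_on D (\<lambda>y. cnj (f y)) \<longleftrightarrow> continuous_on D f"
  using continuous_on_cnj[of D "\<lambda>y. cnj (f y)"] continuous_on_cnj[of D f] by auto

lemma single_valued_mem_iff: "single_valued G \<Longrightarrow> (x, v) \<in> G \<longleftrightarrow> x \<in> Domain G \<and> v = aval G x"
  using aval_eq by fastforce

lemma relcomp_adjXK_self:
  assumes sv: "single_valued S"
    and herm: "\<And>p q. ip p q = cnj (ip q p)"
    and t: "\<And>x y. x \<in> Domain S \<Longrightarrow> y \<in> Domain S \<Longrightarrow> t x y = ip (aval S x) (aval S y)"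
  shows "S O adjXK ip S = {(x, z). x \<in> Domain S \<and> cont_on_d dist (Domain S) (t x) \<and> z \<in> cdual
                                  \<and> (\<forall>y\<in>Domain S. z y = t x y)}"
proof -
  have adj: "(aval S x, z) \<in> adjXK ip S \<longleftrightarrow>
      cont_on_d dist (Domain S) (t x) \<and> z \<in> cdual \<and> (\<forall>y\<in>Domain S. z y = t x y)"
    if x: "x \<in> Domain S" for x z
  proof -
    have "ip (aval S y) (aval S x) = cnj (t x y)" if "y \<in> Domain S" for y
      using herm[of "aval S y" "aval S x"] t[OF x that] by simp
    then have "continuous_on (Domain S) (\<lambda>y. ip (aval S y) (aval S x))
        \<longleftrightarrow> continuous_on (Domain S) (\<lambda>y. cnj (t x y))"
      by (intro continuous_on_cong) simp_all
    moreover have "(\<forall>(y, k)\<in>S. z y = ip (aval S x) k) \<longleftrightarrow> (\<forall>y\<in>Domain S. z y = t x y)"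
      using t[OF x] by (auto simp: single_valued_mem_iff[OF sv])
    ultimately show ?thesis
      unfolding adjXK_def cont_on_d_dist_iff continuous_on_cnj_iff by simp
  qed
  show ?thesis
    using adj by (auto simp: single_valued_mem_iff[OF sv])
qed

lemma scaleC_minus1_left: "(-1) *\<^sub>C x = - x"
  using scaleR_scaleC[of "-1" x] by simp

lemma op_XXs_single_valued: "op_XXs G \<Longrightarrow> single_valued G"
  unfolding op_XXs_def single_valued_def by blast

lemma op_XXs_zero: "op_XXs G \<Longrightarrow> (0, \<lambda>_. 0) \<in> G"
  and op_XXs_add: "op_XXs G \<Longrightarrow> (x, u) \<in> G \<Longrightarrow> (y, w) \<in> G \<Longrightarrow> (x + y, \<lambda>z. u z + w z) \<in> G"
  and op_XXs_scaleC: "op_XXs G \<Longrightarrow> (x, u) \<in> G \<Longrightarrow> (c *\<^sub>C x, \<lambda>z. c * u z) \<in> G"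
  and op_XXs_cdual: "op_XXs G \<Longrightarrow> (x, u) \<in> G \<Longrightarrow> u \<in> cdual"
  unfolding op_XXs_def by blast+

lemma op_XXs_diff:
  assumes "op_XXs G" and "(x, u) \<in> G" and "(y, w) \<in> G"
  shows "(x - y, \<lambda>z. u z - w z) \<in> G"
  using op_XXs_add[OF assms(1,2) op_XXs_scaleC[OF assms(1,3), of "-1"]]
  by (simp add: scaleC_minus1_left)

lemma cdual_add: "u \<in> cdual \<Longrightarrow> w \<in> cdual \<Longrightarrow> (\<lambda>x. u x + w x) \<in> cdual"
  unfolding cdual_def by (auto simp: algebra_simps intro: continuous_on_add)

locale op_completion =
  fixes ip :: "'h::{complex_normed_vec, banach} \<Rightarrow> 'h \<Rightarrow> complex"
    and \<iota> :: "('x::complex_normed_vec \<Rightarrow> complex) \<Rightarrow> 'h"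
    and A :: "('x \<times> ('x \<Rightarrow> complex)) set"
  assumes is_completion: "is_completion_A ip \<iota> A"
    and op: "op_XXs A"
    and lower_bound: "pos_lower_bound A"
begin

sublocale hilbert_ip ip
  using is_completion by unfold_locales (simp add: is_completion_A_def)

lemma iota_add: "u \<in> Range A \<Longrightarrow> w \<in> Range A \<Longrightarrow> \<iota> (\<lambda>x. u x + w x) = \<iota> u + \<iota> w"
  and iota_scaleC: "u \<in> Range A \<Longrightarrow> \<iota> (\<lambda>x. c * u x) = c *\<^sub>C \<iota> u"
  and ip_iota: "(x, u) \<in> A \<Longrightarrow> (y, w) \<in> A \<Longrightarrow> ip (\<iota> u) (\<iota> w) = u y"
  and closure_iota_Range: "closure (\<iota> ` Range A) = UNIV"
  using is_completion unfolding is_completion_A_def by blast+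

lemma iota_diff: "u \<in> Range A \<Longrightarrow> w \<in> Range A \<Longrightarrow> \<iota> (\<lambda>x. u x - w x) = \<iota> u - \<iota> w"
  using iota_add[of u "\<lambda>x. (-1) * w x"] iota_scaleC[of w "-1"] op_XXs_scaleC[OF op, of _ w "-1"]
  by (force simp: scaleC_minus1_left)

lemma zero_in_Range: "(\<lambda>_. 0) \<in> Range A"
  using op_XXs_zero[OF op] by blast

lemma iota_zero: "\<iota> (\<lambda>_. 0) = 0"
  using iota_diff[OF zero_in_Range zero_in_Range] by simp

lemma inj_on_iota: "inj_on \<iota> (Range A)"
proof (rule inj_onI)
  fix u w assume u: "u \<in> Range A" and w: "w \<in> Range A" and eq: "\<iota> u = \<iota> w"
  then obtain x y where x: "(x, u) \<in> A" and y: "(y, w) \<in> A" by blast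
  define d where "d = (\<lambda>z. u z - w z)"
  have dA: "(x - y, d) \<in> A" unfolding d_def by (rule op_XXs_diff[OF op x y])
  have "d (x - y) = 0"
    using ip_iota[OF dA dA] iota_diff[OF u w] eq by (simp add: d_def ip_zero_left)
  moreover obtain \<gamma> where "\<gamma> > 0" and "\<forall>(x, v)\<in>A. complex_of_real (\<gamma> * (norm x)\<^sup>2) \<le> v x"
    using lower_bound unfolding pos_lower_bound_def by blast
  ultimately have "\<gamma> * (norm (x - y))\<^sup>2 \<le> 0"
    using dA by (fastforce simp: less_eq_complex_def)
  with \<open>\<gamma> > 0\<close> have "x = y"
    by (simp add: mult_le_0_iff)
  then have "d = (\<lambda>_. 0)"
    using dA op_XXs_zero[OF op] op_XXs_single_valued[OF op] by (auto dest: single_valuedD)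
  then show "u = w"
    by (simp add: d_def fun_eq_iff)
qed

lemma single_valued_J_op: "single_valued (J_op \<iota> A)"
  using inj_on_iota unfolding J_op_def single_valued_def inj_on_def by blast

lemma adjKX_J_op_iff: "(y, k) \<in> adjKX ip (J_op \<iota> A) \<longleftrightarrow> (\<forall>u\<in>Range A. ip (\<iota> u) k = u y)"
  unfolding adjKX_iff[OF single_valued_J_op] by (auto simp: J_op_def)

lemma single_valued_adjKX_J_op: "single_valued (adjKX ip (J_op \<iota> A))"
proof (rule single_valuedI)
  fix y k k' assume "(y, k) \<in> adjKX ip (J_op \<iota> A)" and "(y, k') \<in> adjKX ip (J_op \<iota> A)"
  then have "\<iota> ` Range A \<subseteq> {h. ip h (k - k') = 0}"
    by (simp add: adjKX_J_op_iff ip_diff_right image_subset_iff)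
  moreover have "closed {h. ip h (k - k') = 0}"
    by (rule closed_Collect_eq[OF continuous_on_ip_left continuous_on_const])
  ultimately have "closure (\<iota> ` Range A) \<subseteq> {h. ip h (k - k') = 0}"
    by (rule closure_minimal)
  then have "ip (k - k') (k - k') = 0"
    using closure_iota_Range by auto
  then show "k = k'"
    by (simp add: ip_self)
qed

lemma adjKX_J_op_of_op: "(x, u) \<in> A \<Longrightarrow> (x, \<iota> u) \<in> adjKX ip (J_op \<iota> A)"
  using ip_iota by (auto simp: adjKX_J_op_iff)

end

locale op_completion_pair =
  A: op_completion ipA \<iota>A A + B: op_completion ipB \<iota>B B
  for ipA :: "'ha::{complex_normed_vec, banach} \<Rightarrow> 'ha \<Rightarrow> complex"
    and \<iota>A and A :: "('x::complex_normed_vec \<times> ('x \<Rightarrow> complex)) set"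
    and ipB :: "'hb::{complex_normed_vec, banach} \<Rightarrow> 'hb \<Rightarrow> complex"
    and \<iota>B and B :: "('x \<times> ('x \<Rightarrow> complex)) set"
begin

abbreviation "JA_adj \<equiv> adjKX ipA (J_op \<iota>A A)"
abbreviation "JB_adj \<equiv> adjKX ipB (J_op \<iota>B B)"
abbreviation "J_adj \<equiv> adjKX (ip_sum ipA ipB) (J_sum \<iota>A A \<iota>B B)"

sublocale sum: hilbert_ip "ip_sum ipA ipB"
  by unfold_locales (rule is_hilbert_ip_ip_sum[OF A.is_hilbert_ip B.is_hilbert_ip])

lemma single_valued_J_sum: "single_valued (J_sum \<iota>A A \<iota>B B)"
  using A.inj_on_iota B.inj_on_iota unfolding J_sum_def single_valued_def inj_on_def by blast

lemma adjKX_J_sum_iff: "(y, k) \<in> J_adj \<longleftrightarrow> (y, fst k) \<in> JA_adj \<and> (y, snd k) \<in> JB_adj"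
proof -
  have "(y, k) \<in> J_adj \<longleftrightarrow> (\<forall>(h, v)\<in>J_sum \<iota>A A \<iota>B B. ip_sum ipA ipB h k = v y)"
    by (rule sum.adjKX_iff[OF single_valued_J_sum])
  also have "\<dots> \<longleftrightarrow>
      (\<forall>u\<in>Range A. \<forall>w\<in>Range B. ipA (\<iota>A u) (fst k) + ipB (\<iota>B w) (snd k) = u y + w y)"
    by (auto simp: J_sum_def ip_sum_def; blast)
  also have "\<dots> \<longleftrightarrow> (\<forall>u\<in>Range A. ipA (\<iota>A u) (fst k) = u y) \<and> (\<forall>w\<in>Range B. ipB (\<iota>B w) (snd k) = w y)"
  proof
    assume H: "\<forall>u\<in>Range A. \<forall>w\<in>Range B. ipA (\<iota>A u) (fst k) + ipB (\<iota>B w) (snd k) = u y + w y"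
    show "(\<forall>u\<in>Range A. ipA (\<iota>A u) (fst k) = u y) \<and> (\<forall>w\<in>Range B. ipB (\<iota>B w) (snd k) = w y)"
      using H[rule_format, OF _ B.zero_in_Range] H[rule_format, OF A.zero_in_Range]
      by (simp add: A.iota_zero B.iota_zero A.ip_zero_left B.ip_zero_left)
  qed simp
  finally show ?thesis
    by (simp add: A.adjKX_J_op_iff B.adjKX_J_op_iff)
qed

lemma single_valued_adjKX_J_sum: "single_valued J_adj"
proof (rule single_valuedI)
  fix y k k' assume "(y, k) \<in> J_adj" and "(y, k') \<in> J_adj"
  then show "k = k'"
    unfolding adjKX_J_sum_iff prod_eq_iff
    using A.single_valued_adjKX_J_op B.single_valued_adjKX_J_op by (blast dest: single_valuedD)
qed

lemma Domain_adjKX_J_sum: "Domain J_adj = form_dom ipA \<iota>A A ipB \<iota>B B"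
  unfolding form_dom_def using adjKX_J_sum_iff by fastforce

lemma aval_adjKX_J_sum:
  assumes "y \<in> form_dom ipA \<iota>A A ipB \<iota>B B"
  shows "aval J_adj y = (aval JA_adj y, aval JB_adj y)"
proof -
  from assms obtain a b where a: "(y, a) \<in> JA_adj" and b: "(y, b) \<in> JB_adj"
    unfolding form_dom_def by blast
  then have "(y, (a, b)) \<in> J_adj"
    by (simp add: adjKX_J_sum_iff)
  then show ?thesis
    using aval_eq[OF single_valued_adjKX_J_sum] aval_eq[OF A.single_valued_adjKX_J_op a]
      aval_eq[OF B.single_valued_adjKX_J_op b] by simp
qed

lemma relcomp_adjXK_adjKX_J_sum: "J_adj O adjXK (ip_sum ipA ipB) J_adj = form_sum ipA \<iota>A A ipB \<iota>B B"
proof -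
  have "form_t ipA \<iota>A A ipB \<iota>B B x y = ip_sum ipA ipB (aval J_adj x) (aval J_adj y)"
    if "x \<in> Domain J_adj" and "y \<in> Domain J_adj" for x y
    using that by (simp add: Domain_adjKX_J_sum aval_adjKX_J_sum form_t_def ip_sum_def)
  then show ?thesis
    unfolding form_sum_def Domain_adjKX_J_sum[symmetric]
    by (rule relcomp_adjXK_self[OF single_valued_adjKX_J_sum, where ip = "ip_sum ipA ipB",
          OF sum.ip_cnj_swap])
qed

lemma op_sum_subset_form_sum: "op_sum A B \<subseteq> form_sum ipA \<iota>A A ipB \<iota>B B"
proof (clarsimp simp: op_sum_def)
  fix x u w assume xu: "(x, u) \<in> A" and xw: "(x, w) \<in> B"
  have xA: "(x, \<iota>A u) \<in> JA_adj" and xB: "(x, \<iota>B w) \<in> JB_adj"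
    using A.adjKX_J_op_of_op[OF xu] B.adjKX_J_op_of_op[OF xw] .
  then have x: "x \<in> form_dom ipA \<iota>A A ipB \<iota>B B"
    unfolding form_dom_def by blast
  have t: "form_t ipA \<iota>A A ipB \<iota>B B x y = u y + w y" if "y \<in> form_dom ipA \<iota>A A ipB \<iota>B B" for y
  proof -
    from that obtain a b where ya: "(y, a) \<in> JA_adj" and yb: "(y, b) \<in> JB_adj"
      unfolding form_dom_def by blast
    have "form_t ipA \<iota>A A ipB \<iota>B B x y = ipA (\<iota>A u) a + ipB (\<iota>B w) b"
      using aval_eq[OF A.single_valued_adjKX_J_op] aval_eq[OF B.single_valued_adjKX_J_op] xA xB ya yb
      by (simp add: form_t_def)
    also have "\<dots> = u y + w y"
      using ya yb Range.intros[OF xu] Range.intros[OF xw]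
      unfolding A.adjKX_J_op_iff B.adjKX_J_op_iff by simp
    finally show ?thesis .
  qed
  have uw: "(\<lambda>y. u y + w y) \<in> cdual"
    using cdual_add[OF op_XXs_cdual[OF A.op xu] op_XXs_cdual[OF B.op xw]] .
  then have "continuous_on (form_dom ipA \<iota>A A ipB \<iota>B B) (form_t ipA \<iota>A A ipB \<iota>B B x)"
    using t by (subst continuous_on_cong[OF refl t]) (auto simp: cdual_def intro: continuous_on_subset)
  then show "(x, \<lambda>y. u y + w y) \<in> form_sum ipA \<iota>A A ipB \<iota>B B"
    unfolding form_sum_def cont_on_d_dist_iff using x t uw by simp
qed

end

theorem theorem4:
  fixes A B :: "('x::{complex_normed_vec, banach} \<times> ('x \<Rightarrow> complex)) set"
    and ipA :: "'ha::{complex_normed_vec, banach} \<Rightarrow> 'ha \<Rightarrow> complex"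
    and \<iota>A :: "('x \<Rightarrow> complex) \<Rightarrow> 'ha"
    and ipB :: "'hb::{complex_normed_vec, banach} \<Rightarrow> 'hb \<Rightarrow> complex"
    and \<iota>B :: "('x \<Rightarrow> complex) \<Rightarrow> 'hb"
  assumes refl: "reflexive_sp TYPE('x)"
    and opA: "op_XXs A" and posA: "positive_op A" and saA: "self_adjoint_op A"
    and lbA: "pos_lower_bound A"
    and opB: "op_XXs B" and posB: "positive_op B" and saB: "self_adjoint_op B"
    and lbB: "pos_lower_bound B"
    and HA: "is_completion_A ipA \<iota>A A"
    and HB: "is_completion_A ipB \<iota>B B"
    and dense: "closure (Domain (adjKX ipA (J_op \<iota>A A)) \<inter> Domain (adjKX ipB (J_op \<iota>B B))) = UNIV"
  shows "adjKX (ip_sum ipA ipB) (J_sum \<iota>A A \<iota>B B)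
           O adjXK (ip_sum ipA ipB) (adjKX (ip_sum ipA ipB) (J_sum \<iota>A A \<iota>B B))
         = form_sum ipA \<iota>A A ipB \<iota>B B
       \<and> op_sum A B \<subseteq> form_sum ipA \<iota>A A ipB \<iota>B B"
proof -
  interpret op_completion_pair ipA \<iota>A A ipB \<iota>B B
    by unfold_locales (fact HA opA lbA HB opB lbB)+
  show ?thesis
    using relcomp_adjXK_adjKX_J_sum op_sum_subset_form_sum by blast
qed

end
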